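(* Fix an integer $\alpha\ge 1$. Then $$\lim_{n\to\infty}\frac{\lambda_{n,\alpha}}{n}=\frac{1}{\alpha}.$$
   Context: All graphs are finite and simple. For a graph $G$, $\lambda(G)$ denotes the spectral radius (largest eigenvalue) of its adjacency matrix, and $\alpha(G)$ denotes its independence number. For integers $n\ge \alpha\ge 1$, $\mathcal{G}_{n,\alpha}$ is the set of all connected graphs of order $n$ with independence number $\alpha$, and $\lambda_{n,\alpha}=\min\{\lambda(G): G\in\mathcal{G}_{n,\alpha}\}$. *)

theory Defs
  imports Complex_Main
begin

definition simple_graph :: "nat \<Rightarrow> (nat \<Rightarrow> nat \<Rightarrow> bool) \<Rightarrow> bool" where
  "simple_graph n E \<longleftrightarrow>
     (\<forall>i j. E i j \<longrightarrow> i < n \<and> j < n) \<and>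
     (\<forall>i j. E i j \<longrightarrow> E j i) \<and>
     (\<forall>i. \<not> E i i)"

definition graph_connected :: "nat \<Rightarrow> (nat \<Rightarrow> nat \<Rightarrow> bool) \<Rightarrow> bool" where
  "graph_connected n E \<longleftrightarrow> n \<ge> 1 \<and> (\<forall>i<n. \<forall>j<n. E\<^sup>*\<^sup>* i j)"

definition independent_set :: "nat \<Rightarrow> (nat \<Rightarrow> nat \<Rightarrow> bool) \<Rightarrow> nat set \<Rightarrow> bool" where
  "independent_set n E S \<longleftrightarrow> S \<subseteq> {0..<n} \<and> (\<forall>i\<in>S. \<forall>j\<in>S. \<not> E i j)"

definition independence_number :: "nat \<Rightarrow> (nat \<Rightarrow> nat \<Rightarrow> bool) \<Rightarrow> nat" where
  "independence_number n E = Max (card ` {S. independent_set n E S})"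

definition adj :: "(nat \<Rightarrow> nat \<Rightarrow> bool) \<Rightarrow> nat \<Rightarrow> nat \<Rightarrow> real" where
  "adj E i j = (if E i j then 1 else 0)"

definition adj_eigenvalue :: "nat \<Rightarrow> (nat \<Rightarrow> nat \<Rightarrow> bool) \<Rightarrow> real \<Rightarrow> bool" where
  "adj_eigenvalue n E \<mu> \<longleftrightarrow>
     (\<exists>v :: nat \<Rightarrow> real. (\<exists>i<n. v i \<noteq> 0) \<and>
        (\<forall>i<n. (\<Sum>j<n. adj E i j * v j) = \<mu> * v i))"

definition spectral_radius_graph :: "nat \<Rightarrow> (nat \<Rightarrow> nat \<Rightarrow> bool) \<Rightarrow> real" where
  "spectral_radius_graph n E = Max {\<mu>. adj_eigenvalue n E \<mu>}"

definition lambda_min :: "nat \<Rightarrow> nat \<Rightarrow> real" where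
  "lambda_min n a = Inf {spectral_radius_graph n E | E.
       simple_graph n E \<and> graph_connected n E \<and> independence_number n E = a}"

end

(*
  Lower bound: the Rayleigh quotient of the all-ones vector shows that the spectral radius is at
  least the average degree d, and a greedy argument (delete a vertex of minimum degree together
  with its neighbours, which lowers the independence number) gives n^2 <= alpha * n * (d + 1),
  so lambda >= n/alpha - 1.
  Upper bound: split the vertices into the alpha residue classes mod alpha, make each class a
  clique and join the classes by the path 0 - 1 - ... - (alpha - 1).  This connected graph has
  independence number alpha and maximum degree at most n/alpha + 3, which bounds its spectral
  radius.
*)
theory Submission
  imports Defs "HOL-Analysis.Analysis" "Jordan_Normal_Form.Char_Poly"
begin

section \<open>Quadratic forms and the Rayleigh quotient\<close>

definition quad_form :: "nat \<Rightarrow> (nat \<Rightarrow> nat \<Rightarrow> real) \<Rightarrow> (nat \<Rightarrow> real) \<Rightarrow> real" where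
  "quad_form n a x = (\<Sum>i<n. \<Sum>j<n. a i j * x i * x j)"

definition sum_squares :: "nat \<Rightarrow> (nat \<Rightarrow> real) \<Rightarrow> real" where
  "sum_squares n x = (\<Sum>i<n. (x i)\<^sup>2)"

lemma sum_squares_nonneg: "0 \<le> sum_squares n x"
  unfolding sum_squares_def by (intro sum_nonneg) simp

lemma power2_le_sum_squares: "i < n \<Longrightarrow> (x i)\<^sup>2 \<le> sum_squares n x"
  unfolding sum_squares_def by (intro member_le_sum) auto

lemma sum_squares_eq_0_iff: "sum_squares n x = 0 \<longleftrightarrow> (\<forall>i<n. x i = 0)"
  unfolding sum_squares_def by (auto simp: sum_nonneg_eq_0_iff)

lemma sum_squares_pos: "\<exists>i<n. x i \<noteq> 0 \<Longrightarrow> 0 < sum_squares n x"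
  by (metis order_less_le sum_squares_eq_0_iff sum_squares_nonneg)

lemma quad_form_eq_0: "sum_squares n x = 0 \<Longrightarrow> quad_form n a x = 0"
  unfolding quad_form_def by (simp add: sum_squares_eq_0_iff)

lemma sum_squares_add_scaled:
  "sum_squares n (\<lambda>i. x i + t * w i)
     = sum_squares n x + 2 * t * (\<Sum>i<n. x i * w i) + t\<^sup>2 * sum_squares n w"
  unfolding sum_squares_def
  by (simp add: power2_eq_square algebra_simps sum.distrib sum_distrib_left)

lemma quad_form_add_scaled:
  fixes a :: "nat \<Rightarrow> nat \<Rightarrow> real"
  assumes sym: "\<And>i j. a i j = a j i"
  shows "quad_form n a (\<lambda>i. x i + t * w i)
     = quad_form n a x + 2 * t * (\<Sum>i<n. w i * (\<Sum>j<n. a i j * x j)) + t\<^sup>2 * quad_form n a w"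
proof -
  have "(\<Sum>i<n. \<Sum>j<n. a i j * x i * w j) = (\<Sum>j<n. \<Sum>i<n. a i j * x i * w j)"
    by (rule sum.swap)
  also have "\<dots> = (\<Sum>i<n. w i * (\<Sum>j<n. a i j * x j))"
    by (simp add: sum_distrib_left sym[of _ "_ :: nat"] mult_ac)
  finally have cross1: "(\<Sum>i<n. \<Sum>j<n. a i j * x i * w j) = (\<Sum>i<n. w i * (\<Sum>j<n. a i j * x j))" .
  have cross2: "(\<Sum>i<n. \<Sum>j<n. a i j * w i * x j) = (\<Sum>i<n. w i * (\<Sum>j<n. a i j * x j))"
    by (simp add: sum_distrib_left mult_ac)
  have "quad_form n a (\<lambda>i. x i + t * w i) = quad_form n a x
      + t * (\<Sum>i<n. \<Sum>j<n. a i j * x i * w j) + t * (\<Sum>i<n. \<Sum>j<n. a i j * w i * x j)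
      + t\<^sup>2 * quad_form n a w"
    unfolding quad_form_def by (simp add: power2_eq_square algebra_simps sum.distrib sum_distrib_left)
  then show ?thesis by (simp add: cross1 cross2)
qed

lemma linear_coeff_eq_0_if_nonneg:
  fixes b c :: real
  assumes nonneg: "\<And>t. 0 \<le> 2 * t * b + t\<^sup>2 * c" and "0 \<le> c"
  shows "b = 0"
proof -
  define t where "t = - b / (c + 1)"
  have tc: "t * (c + 1) = - b" unfolding t_def using \<open>0 \<le> c\<close> by simp
  have "0 \<le> (2 * t * b + t\<^sup>2 * c) * (c + 1)\<^sup>2" using nonneg[of t] by simp
  also have "\<dots> = 2 * b * (t * (c + 1)) * (c + 1) + (t * (c + 1))\<^sup>2 * c"
    by (simp add: power2_eq_square algebra_simps)
  also have "\<dots> = - (b\<^sup>2 * (c + 2))" unfolding tc by (simp add: power2_eq_square algebra_simps)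
  finally have "b\<^sup>2 * (c + 2) \<le> 0" by simp
  then show ?thesis using \<open>0 \<le> c\<close> by (simp add: mult_le_0_iff)
qed

lemma compact_unit_sphere:
  "compact {x :: nat \<Rightarrow> real. sum_squares n x = 1 \<and> (\<forall>i\<ge>n. x i = 0)}"
proof -
  define P where "P = PiE UNIV (\<lambda>i :: nat. if i < n then {-1..1 :: real} else {0})"
  have "compactin (product_topology (\<lambda>i. euclidean) UNIV) P"
    unfolding P_def compactin_PiE by auto
  then have "compact P" by (simp add: euclidean_product_topology)
  moreover have "closed {x :: nat \<Rightarrow> real. sum_squares n x = 1}"
    unfolding sum_squares_def
    by (intro closed_Collect_eq continuous_intros continuous_on_product_coordinates)
  moreover have "{x :: nat \<Rightarrow> real. sum_squares n x = 1 \<and> (\<forall>i\<ge>n. x i = 0)}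
      = P \<inter> {x. sum_squares n x = 1}"
  proof safe
    fix x :: "nat \<Rightarrow> real"
    assume x: "sum_squares n x = 1" "\<forall>i\<ge>n. x i = 0"
    have "\<bar>x i\<bar> \<le> 1" if "i < n" for i
    proof -
      have "(x i)\<^sup>2 \<le> 1" using power2_le_sum_squares[OF that, of x] x(1) by simp
      then show ?thesis by (simp add: abs_square_le_1)
    qed
    then show "x \<in> P" using x(2) by (auto simp: P_def PiE_iff not_less abs_le_iff)
  next
    fix x i assume "x \<in> P" "n \<le> i"
    then show "x i = 0" by (auto simp: P_def PiE_iff dest!: spec[of _ i])
  qed
  ultimately show ?thesis by (simp add: compact_Int_closed)
qed

lemma quad_form_attains_max_on_sphere:
  assumes "n \<ge> 1"
  obtains x where "sum_squares n x = 1"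
    and "\<And>y. quad_form n a y \<le> quad_form n a x * sum_squares n y"
proof -
  define K where "K = {x :: nat \<Rightarrow> real. sum_squares n x = 1 \<and> (\<forall>i\<ge>n. x i = 0)}"
  define e where "e (i :: nat) = (if i = 0 then 1 else 0 :: real)" for i
  have "sum_squares n e = (\<Sum>i<n. e i)"
    unfolding sum_squares_def by (intro sum.cong) (auto simp: e_def)
  then have "e \<in> K" using assms by (simp add: K_def e_def)
  moreover have "continuous_on K (quad_form n a)"
    unfolding quad_form_def
    by (intro continuous_intros continuous_on_subset[OF continuous_on_product_coordinates]) auto
  ultimately obtain x where x: "x \<in> K" and max: "\<And>y. y \<in> K \<Longrightarrow> quad_form n a y \<le> quad_form n a x"
    using continuous_attains_sup[OF compact_unit_sphere[of n, folded K_def]] by blast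
  have "quad_form n a y \<le> quad_form n a x * sum_squares n y" for y
  proof (cases "sum_squares n y = 0")
    case True
    then show ?thesis by (simp add: quad_form_eq_0)
  next
    case False
    define s where "s = sum_squares n y"
    have s: "s > 0" using False sum_squares_nonneg[of n y] unfolding s_def by linarith
    define z where "z i = (if i < n then y i / sqrt s else 0)" for i
    have "sum_squares n z = (\<Sum>i<n. (y i)\<^sup>2 / s)"
      unfolding sum_squares_def z_def using s by (intro sum.cong) (auto simp: power_divide)
    also have "\<dots> = 1" using s unfolding s_def sum_squares_def by (simp add: sum_divide_distrib[symmetric])
    finally have "quad_form n a z \<le> quad_form n a x" using max by (simp add: K_def z_def)
    moreover have "quad_form n a z = quad_form n a y / s"
      unfolding quad_form_def z_def using s by (simp add: sum_divide_distrib[symmetric] field_simps)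
    ultimately show ?thesis using s unfolding s_def by (simp add: field_simps)
  qed
  then show ?thesis using that x unfolding K_def by blast
qed

lemma quad_form_eigenvector:
  assumes "\<forall>i<n. (\<Sum>j<n. a i j * v j) = \<mu> * v i"
  shows "quad_form n a v = \<mu> * sum_squares n v"
proof -
  have "quad_form n a v = (\<Sum>i<n. v i * (\<Sum>j<n. a i j * v j))"
    unfolding quad_form_def by (simp add: sum_distrib_left mult_ac)
  also have "\<dots> = (\<Sum>i<n. \<mu> * (v i)\<^sup>2)"
    using assms by (intro sum.cong) (auto simp: power2_eq_square)
  finally show ?thesis unfolding sum_squares_def by (simp add: sum_distrib_left)
qed

text \<open>A maximiser of the Rayleigh quotient is an eigenvector: the nonnegative function
  \<open>\<mu> |y|\<^sup>2 - y\<^sup>T A y\<close> vanishes at \<open>x\<close>, so its derivative in the direction of the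
  residual \<open>w = \<mu> x - A x\<close>, which is \<open>2 |w|\<^sup>2\<close>, must vanish.\<close>

lemma rayleigh_maximiser_is_eigenvector:
  fixes a :: "nat \<Rightarrow> nat \<Rightarrow> real"
  assumes sym: "\<And>i j. a i j = a j i"
    and bound: "\<And>y. quad_form n a y \<le> \<mu> * sum_squares n y"
    and attained: "quad_form n a x = \<mu> * sum_squares n x"
  shows "\<forall>i<n. (\<Sum>j<n. a i j * x j) = \<mu> * x i"
proof -
  define q where "q y = \<mu> * sum_squares n y - quad_form n a y" for y
  define w where "w i = \<mu> * x i - (\<Sum>j<n. a i j * x j)" for i
  have q_nonneg: "0 \<le> q y" for y using bound[of y] by (simp add: q_def)
  have w_sq: "w i * w i = \<mu> * (x i * w i) - w i * (\<Sum>j<n. a i j * x j)" for i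
    by (simp add: w_def algebra_simps)
  have expand: "q (\<lambda>i. x i + t * w i)
      = 2 * t * (\<mu> * (\<Sum>i<n. x i * w i) - (\<Sum>i<n. w i * (\<Sum>j<n. a i j * x j))) + t\<^sup>2 * q w" for t
    by (simp add: q_def sum_squares_add_scaled quad_form_add_scaled[OF sym] attained algebra_simps)
  have residual: "\<mu> * (\<Sum>i<n. x i * w i) - (\<Sum>i<n. w i * (\<Sum>j<n. a i j * x j)) = (\<Sum>i<n. w i * w i)"
    by (simp add: w_sq sum_subtractf sum_distrib_left)
  have "0 \<le> 2 * t * (\<Sum>i<n. w i * w i) + t\<^sup>2 * q w" for t
    using q_nonneg[of "\<lambda>i. x i + t * w i"] unfolding expand residual .
  then have "(\<Sum>i<n. w i * w i) = 0"
    using linear_coeff_eq_0_if_nonneg q_nonneg by blast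
  then have "\<forall>i<n. w i = 0" by (simp add: sum_nonneg_eq_0_iff)
  then show ?thesis by (simp add: w_def)
qed

section \<open>The spectral radius of a graph\<close>

lemma adj_symmetric: "simple_graph n E \<Longrightarrow> adj E i j = adj E j i"
  unfolding simple_graph_def adj_def by metis

lemma finite_adj_eigenvalues: "finite {\<mu>. adj_eigenvalue n E \<mu>}"
proof -
  define A :: "real Matrix.mat" where "A = Matrix.mat n n (\<lambda>(i, j). adj E i j)"
  have A: "A \<in> carrier_mat n n" unfolding A_def by simp
  have "{\<mu>. adj_eigenvalue n E \<mu>} \<subseteq> {k. poly (char_poly A) k = 0}"
  proof
    fix \<mu> assume "\<mu> \<in> {\<mu>. adj_eigenvalue n E \<mu>}"
    then obtain x where x: "\<exists>i<n. x i \<noteq> 0" "\<forall>i<n. (\<Sum>j<n. adj E i j * x j) = \<mu> * x i"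
      unfolding adj_eigenvalue_def by auto
    have "A *\<^sub>v vec n x = \<mu> \<cdot>\<^sub>v vec n x"
      using x(2) by (intro eq_vecI) (auto simp: A_def scalar_prod_def lessThan_atLeast0)
    moreover have "vec n x \<noteq> 0\<^sub>v n" using x(1) by (auto simp: vec_eq_iff)
    ultimately have "eigenvalue A \<mu>"
      unfolding eigenvalue_def eigenvector_def using A by (metis carrier_matD(1) vec_carrier)
    then show "\<mu> \<in> {k. poly (char_poly A) k = 0}"
      using eigenvalue_root_char_poly[OF A] by simp
  qed
  moreover have "char_poly A \<noteq> 0" using degree_monic_char_poly[OF A] by auto
  ultimately show ?thesis using poly_roots_finite finite_subset by blast
qed

lemma adj_eigenvalue_le_rayleigh_bound:
  assumes "adj_eigenvalue n E \<mu>'" and "\<And>y. quad_form n (adj E) y \<le> \<mu> * sum_squares n y"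
  shows "\<mu>' \<le> \<mu>"
proof -
  obtain v where v: "\<exists>i<n. v i \<noteq> 0" "\<forall>i<n. (\<Sum>j<n. adj E i j * v j) = \<mu>' * v i"
    using assms(1) unfolding adj_eigenvalue_def by blast
  have "\<mu>' * sum_squares n v \<le> \<mu> * sum_squares n v"
    using assms(2)[of v] quad_form_eigenvector[OF v(2)] by simp
  then show ?thesis using sum_squares_pos[OF v(1)] by simp
qed

lemma rayleigh_max_is_adj_eigenvalue:
  assumes "simple_graph n E" and "sum_squares n x = 1"
    and "\<And>y. quad_form n (adj E) y \<le> quad_form n (adj E) x * sum_squares n y"
  shows "adj_eigenvalue n E (quad_form n (adj E) x)"
  unfolding adj_eigenvalue_def
proof (intro exI[of _ x] conjI)
  show "\<exists>i<n. x i \<noteq> 0" using assms(2) by (metis sum_squares_eq_0_iff zero_neq_one)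
  show "\<forall>i<n. (\<Sum>j<n. adj E i j * x j) = quad_form n (adj E) x * x i"
    using rayleigh_maximiser_is_eigenvector[OF adj_symmetric[OF assms(1)] assms(3)] assms(2)
    by simp
qed

lemma spectral_radius_graph_rayleigh:
  assumes "simple_graph n E" and "n \<ge> 1"
  obtains x where "sum_squares n x = 1" and "spectral_radius_graph n E = quad_form n (adj E) x"
    and "\<And>y. quad_form n (adj E) y \<le> quad_form n (adj E) x * sum_squares n y"
proof -
  obtain x where x: "sum_squares n x = 1"
    "\<And>y. quad_form n (adj E) y \<le> quad_form n (adj E) x * sum_squares n y"
    using quad_form_attains_max_on_sphere[OF assms(2)] by blast
  have "spectral_radius_graph n E = quad_form n (adj E) x"
    unfolding spectral_radius_graph_def
    by (rule Max_eqI[OF finite_adj_eigenvalues])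
      (use rayleigh_max_is_adj_eigenvalue[OF assms(1) x] adj_eigenvalue_le_rayleigh_bound[OF _ x(2)] in auto)
  with x that show ?thesis by blast
qed

lemma adj_eigenvalue_spectral_radius_graph:
  assumes "simple_graph n E" and "n \<ge> 1"
  shows "adj_eigenvalue n E (spectral_radius_graph n E)"
  by (metis assms rayleigh_max_is_adj_eigenvalue spectral_radius_graph_rayleigh)

lemma quad_form_le_spectral_radius_graph:
  assumes "simple_graph n E" and "n \<ge> 1"
  shows "quad_form n (adj E) y \<le> spectral_radius_graph n E * sum_squares n y"
  by (metis assms spectral_radius_graph_rayleigh)

definition degree_in :: "(nat \<Rightarrow> nat \<Rightarrow> bool) \<Rightarrow> nat set \<Rightarrow> nat \<Rightarrow> nat" where
  "degree_in E V i = card {j\<in>V. E i j}"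

lemma degree_in_mono: "finite V \<Longrightarrow> U \<subseteq> V \<Longrightarrow> degree_in E U i \<le> degree_in E V i"
  unfolding degree_in_def by (intro card_mono) auto

lemma sum_adj_eq_degree: "(\<Sum>j<n. adj E i j) = real (degree_in E {..<n} i)"
proof -
  have "(\<Sum>j<n. adj E i j) = (\<Sum>j\<in>{j\<in>{..<n}. E i j}. 1)"
    unfolding adj_def by (rule sum.inter_filter[symmetric]) simp
  then show ?thesis by (simp add: degree_in_def)
qed

lemma degree_sum_le_spectral_radius_graph:
  assumes "simple_graph n E" and "n \<ge> 1"
  shows "(\<Sum>i<n. real (degree_in E {..<n} i)) \<le> spectral_radius_graph n E * real n"
proof -
  have "quad_form n (adj E) (\<lambda>_. 1) = (\<Sum>i<n. real (degree_in E {..<n} i))"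
    by (simp add: quad_form_def sum_adj_eq_degree)
  moreover have "sum_squares n (\<lambda>_. 1) = real n" by (simp add: sum_squares_def)
  ultimately show ?thesis using quad_form_le_spectral_radius_graph[OF assms, of "\<lambda>_. 1"] by simp
qed

lemma adj_eigenvalue_le_max_degree:
  assumes "adj_eigenvalue n E \<mu>" and "\<And>i. i < n \<Longrightarrow> real (degree_in E {..<n} i) \<le> D"
  shows "\<mu> \<le> D"
proof -
  obtain v where v: "\<exists>i<n. v i \<noteq> 0" "\<forall>i<n. (\<Sum>j<n. adj E i j * v j) = \<mu> * v i"
    using assms(1) unfolding adj_eigenvalue_def by blast
  have ne: "(\<lambda>i. \<bar>v i\<bar>) ` {..<n} \<noteq> {}" using v(1) by auto
  define M where "M = Max ((\<lambda>i. \<bar>v i\<bar>) ` {..<n})"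
  obtain i where i: "i < n" "\<bar>v i\<bar> = M" using Max_in[OF _ ne] unfolding M_def by auto
  have M_ge: "\<bar>v j\<bar> \<le> M" if "j < n" for j unfolding M_def using that by (intro Max_ge) auto
  have "M > 0" using v(1) M_ge by force
  have "\<bar>\<mu>\<bar> * M = \<bar>\<Sum>j<n. adj E i j * v j\<bar>" using v(2) i by (simp add: abs_mult)
  also have "\<dots> \<le> (\<Sum>j<n. adj E i j * M)"
    by (rule order_trans[OF sum_abs sum_mono]) (auto simp: abs_mult adj_def M_ge)
  also have "\<dots> = M * real (degree_in E {..<n} i)"
    by (simp add: sum_distrib_left[symmetric] sum_adj_eq_degree mult.commute)
  also have "\<dots> \<le> M * D" using assms(2)[OF i(1)] \<open>M > 0\<close> by simp
  finally show ?thesis using \<open>M > 0\<close> by simp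
qed

section \<open>Independence number and degrees\<close>

definition independence_at_most :: "(nat \<Rightarrow> nat \<Rightarrow> bool) \<Rightarrow> nat set \<Rightarrow> nat \<Rightarrow> bool" where
  "independence_at_most E V k \<longleftrightarrow> (\<forall>S\<subseteq>V. (\<forall>i\<in>S. \<forall>j\<in>S. \<not> E i j) \<longrightarrow> card S \<le> k)"

lemma card_le_independence_number:
  assumes "independent_set n E S"
  shows "card S \<le> independence_number n E"
proof -
  have "finite {S. independent_set n E S}"
    by (rule finite_subset[of _ "Pow {0..<n}"]) (auto simp: independent_set_def)
  then show ?thesis unfolding independence_number_def using assms by (intro Max_ge) auto
qed

lemma independence_at_most_independence_number:
  "independence_at_most E {..<n} (independence_number n E)"
  unfolding independence_at_most_def
  using card_le_independence_number by (auto simp: independent_set_def lessThan_atLeast0)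

lemma independence_at_most_delete_closed_neighbourhood:
  assumes sym: "\<And>i j. E i j \<Longrightarrow> E j i" and irr: "\<And>i. \<not> E i i"
    and "finite V" and "v \<in> V" and "independence_at_most E V (Suc k)"
  shows "independence_at_most E (V - insert v {j\<in>V. E v j}) k"
  unfolding independence_at_most_def
proof (intro allI impI)
  fix S assume S: "S \<subseteq> V - insert v {j\<in>V. E v j}" and indep: "\<forall>i\<in>S. \<forall>j\<in>S. \<not> E i j"
  then have "\<forall>i\<in>insert v S. \<forall>j\<in>insert v S. \<not> E i j" using irr sym by blast
  moreover have "insert v S \<subseteq> V" using S \<open>v \<in> V\<close> by auto
  ultimately have "card (insert v S) \<le> Suc k"
    using assms(5) unfolding independence_at_most_def by blast
  moreover have "finite S" "v \<notin> S" using S \<open>finite V\<close> finite_subset by auto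
  ultimately show "card S \<le> k" by simp
qed

lemma card_closed_neighbourhood_sq_le:
  assumes "finite V" and "v \<in> V" and "\<not> E v v"
    and min: "\<And>u. u \<in> V \<Longrightarrow> degree_in E V v \<le> degree_in E V u"
  shows "(real (card (insert v {j\<in>V. E v j})))\<^sup>2
    \<le> (\<Sum>i \<in> insert v {j\<in>V. E v j}. real (degree_in E V i) + 1)"
proof -
  define D where "D = insert v {j\<in>V. E v j}"
  have card_D: "card D = degree_in E V v + 1"
    unfolding D_def degree_in_def using assms(1,3) by simp
  have "(real (card D))\<^sup>2 = (\<Sum>i\<in>D. real (degree_in E V v) + 1)"
    using card_D by (simp add: power2_eq_square)
  also have "\<dots> \<le> (\<Sum>i\<in>D. real (degree_in E V i) + 1)"
    using min \<open>v \<in> V\<close> by (intro sum_mono) (auto simp: D_def)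
  finally show ?thesis unfolding D_def .
qed

lemma power2_add_le_Cauchy:
  fixes a b c k :: real
  assumes "0 \<le> k" and "0 \<le> c" and "0 \<le> b" and "b\<^sup>2 \<le> k * c"
  shows "(a + b)\<^sup>2 \<le> (k + 1) * (a\<^sup>2 + c)"
proof (cases "k = 0")
  case True
  then show ?thesis using assms by simp
next
  case False
  have "(k * a - b)\<^sup>2 = k * (k + 1) * a\<^sup>2 + (k + 1) * b\<^sup>2 - k * (a + b)\<^sup>2"
    by (simp add: power2_eq_square algebra_simps)
  also have "\<dots> \<le> k * (k + 1) * a\<^sup>2 + (k + 1) * (k * c) - k * (a + b)\<^sup>2"
    using assms by (simp add: mult_left_mono)
  also have "\<dots> = k * ((k + 1) * (a\<^sup>2 + c) - (a + b)\<^sup>2)"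
    by (simp add: algebra_simps)
  finally have "0 \<le> k * ((k + 1) * (a\<^sup>2 + c) - (a + b)\<^sup>2)"
    by (meson order_trans zero_le_power2)
  then show ?thesis using False assms(1) by (simp add: zero_le_mult_iff)
qed

lemma card_sq_le_independence_mul_degree_sum:
  assumes sym: "\<And>i j. E i j \<Longrightarrow> E j i" and irr: "\<And>i. \<not> E i i"
    and "finite V" and "independence_at_most E V k"
  shows "(real (card V))\<^sup>2 \<le> real k * (\<Sum>i\<in>V. real (degree_in E V i) + 1)"
  using assms(3,4)
proof (induction k arbitrary: V)
  case 0
  have "V = {}"
  proof (rule ccontr)
    assume "V \<noteq> {}"
    then obtain v where "{v} \<subseteq> V" by blast
    moreover have "\<forall>i\<in>{v}. \<forall>j\<in>{v}. \<not> E i j" using irr by simp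
    ultimately have "card {v} \<le> 0" using "0.prems"(2) unfolding independence_at_most_def by blast
    then show False by simp
  qed
  then show ?case by simp
next
  case (Suc k)
  show ?case
  proof (cases "V = {}")
    case False
    have fin_deg: "finite (degree_in E V ` V)" using Suc.prems(1) by simp
    obtain v where v: "v \<in> V" and v_min: "degree_in E V v = Min (degree_in E V ` V)"
      using Min_in[OF fin_deg] False by (metis image_iff image_is_empty)
    have min: "degree_in E V v \<le> degree_in E V u" if "u \<in> V" for u
      using Min_le[OF fin_deg] that v_min by simp
    define D where "D = insert v {j\<in>V. E v j}"
    define V' where "V' = V - D"
    define T where "T = (\<Sum>i\<in>V'. real (degree_in E V' i) + 1)"
    have DV: "D \<subseteq> V" using v by (auto simp: D_def)
    have "finite V'" using Suc.prems(1) by (simp add: V'_def)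
    have IH: "(real (card V'))\<^sup>2 \<le> real k * T"
      using Suc.IH[OF \<open>finite V'\<close>] independence_at_most_delete_closed_neighbourhood[OF sym irr
          Suc.prems(1) v Suc.prems(2)]
      by (simp add: T_def V'_def D_def)
    have T_le: "T \<le> (\<Sum>i\<in>V'. real (degree_in E V i) + 1)"
      unfolding T_def V'_def using Suc.prems(1) by (intro sum_mono) (simp add: degree_in_mono)
    have D_sq: "(real (card D))\<^sup>2 \<le> (\<Sum>i\<in>D. real (degree_in E V i) + 1)"
      unfolding D_def using card_closed_neighbourhood_sq_le[OF Suc.prems(1) v irr min] .
    have split: "(\<Sum>i\<in>V. real (degree_in E V i) + 1)
        = (\<Sum>i\<in>D. real (degree_in E V i) + 1) + (\<Sum>i\<in>V'. real (degree_in E V i) + 1)"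
      unfolding V'_def by (simp add: sum.subset_diff[OF DV Suc.prems(1)])
    have "card V = card D + card V'"
      unfolding V'_def using Suc.prems(1) DV card_mono[OF Suc.prems(1) DV]
      by (simp add: card_Diff_subset finite_subset)
    then have "(real (card V))\<^sup>2 = (real (card D) + real (card V'))\<^sup>2" by simp
    also have "\<dots> \<le> (real k + 1) * ((real (card D))\<^sup>2 + T)"
      by (rule power2_add_le_Cauchy) (use IH in \<open>auto simp: T_def intro: sum_nonneg\<close>)
    also have "\<dots> \<le> (real k + 1) * (\<Sum>i\<in>V. real (degree_in E V i) + 1)"
      using T_le D_sq split by (intro mult_left_mono) auto
    finally show ?thesis by (simp add: add.commute)
  qed simp
qed

lemma spectral_radius_graph_ge:
  assumes "simple_graph n E" and "n \<ge> 1" and "independence_number n E = a" and "a \<ge> 1"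
  shows "real n / real a - 1 \<le> spectral_radius_graph n E"
proof -
  define s where "s = (\<Sum>i<n. real (degree_in E {..<n} i))"
  have "\<And>i j. E i j \<Longrightarrow> E j i" "\<And>i. \<not> E i i" using assms(1) by (auto simp: simple_graph_def)
  then have "real n * real n \<le> real a * (s + real n)"
    using card_sq_le_independence_mul_degree_sum[of E "{..<n}" a]
      independence_at_most_independence_number[of E n] assms(3)
    by (simp add: s_def sum.distrib power2_eq_square)
  then have "real n / real a \<le> s / real n + 1"
    using assms(2,4) by (simp add: field_simps)
  moreover have "s / real n \<le> spectral_radius_graph n E"
    using degree_sum_le_spectral_radius_graph[OF assms(1,2)] assms(2)
    by (simp add: s_def divide_le_eq mult.commute)
  ultimately show ?thesis by linarith
qed

section \<open>An extremal graph\<close>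

definition clique_path_graph :: "nat \<Rightarrow> nat \<Rightarrow> nat \<Rightarrow> nat \<Rightarrow> bool" where
  "clique_path_graph a n i j \<longleftrightarrow> i < n \<and> j < n \<and> i \<noteq> j \<and>
     (i mod a = j mod a \<or> (Suc i = j \<and> j < a) \<or> (Suc j = i \<and> i < a))"

lemma simple_graph_clique_path_graph: "simple_graph n (clique_path_graph a n)"
  unfolding simple_graph_def clique_path_graph_def by auto

lemma graph_connected_clique_path_graph:
  assumes "a \<ge> 1" and "n \<ge> 1"
  shows "graph_connected n (clique_path_graph a n)"
proof -
  let ?G = "clique_path_graph a n"
  have path: "r < a \<Longrightarrow> r < n \<Longrightarrow> ?G\<^sup>*\<^sup>* 0 r" for r
  proof (induction r)
    case (Suc r)
    then have "?G\<^sup>*\<^sup>* 0 r" by simp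
    moreover have "?G r (Suc r)" using Suc.prems by (simp add: clique_path_graph_def)
    ultimately show ?case by (rule rtranclp.rtrancl_into_rtrancl)
  qed simp
  have from_0: "?G\<^sup>*\<^sup>* 0 i" if "i < n" for i
  proof -
    have "i mod a < n" using that by (meson le_less_trans mod_less_eq_dividend)
    then have "?G\<^sup>*\<^sup>* 0 (i mod a)" using path assms(1) by simp
    moreover have "?G\<^sup>*\<^sup>* (i mod a) i"
      using \<open>i mod a < n\<close> that by (cases "i mod a = i") (auto simp: clique_path_graph_def)
    ultimately show ?thesis by simp
  qed
  have "symp ?G" by (auto simp: symp_def clique_path_graph_def)
  then have "?G\<^sup>*\<^sup>* i j" if "i < n" "j < n" for i j
    using from_0[OF that(1)] from_0[OF that(2)] by (metis rtranclp_trans symp_def symp_rtranclp)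
  then show ?thesis unfolding graph_connected_def using assms(2) by blast
qed

lemma independence_number_clique_path_graph:
  assumes "a \<ge> 1" and "2 * a \<le> n"
  shows "independence_number n (clique_path_graph a n) = a"
proof -
  let ?G = "clique_path_graph a n"
  have le: "card S \<le> a" if "independent_set n ?G S" for S
  proof -
    have "inj_on (\<lambda>i. i mod a) S"
      using that by (auto intro!: inj_onI simp: independent_set_def clique_path_graph_def subset_iff)
    then have "card S = card ((\<lambda>i. i mod a) ` S)" by (simp add: card_image)
    also have "\<dots> \<le> card {..<a}" using assms(1) by (intro card_mono) auto
    finally show ?thesis by simp
  qed
  have "i mod a = i - a" if "i \<in> {a..<2 * a}" for i
    using that by (auto simp: le_mod_geq intro!: mod_less)
  then have "independent_set n ?G {a..<2 * a}"
    using assms(2) by (auto simp: independent_set_def clique_path_graph_def)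
  moreover have "finite {S. independent_set n ?G S}"
    by (rule finite_subset[of _ "Pow {0..<n}"]) (auto simp: independent_set_def)
  ultimately show ?thesis
    unfolding independence_number_def using le
    by (intro Max_eqI) (auto intro!: image_eqI[of a card "{a..<2 * a}"])
qed

lemma degree_clique_path_graph_le:
  "degree_in (clique_path_graph a n) {..<n} i \<le> n div a + 3"
proof -
  define A where "A = {j. j < n \<and> j mod a = i mod a}"
  have "A \<subseteq> (\<lambda>q. q * a + i mod a) ` {..n div a}"
  proof
    fix j assume "j \<in> A"
    then have "j = j div a * a + i mod a" "j div a \<le> n div a"
      by (auto simp: A_def div_le_mono) (metis div_mult_mod_eq)
    then show "j \<in> (\<lambda>q. q * a + i mod a) ` {..n div a}" by blast
  qed
  then have "card A \<le> card {..n div a}"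
    by (meson card_image_le card_mono finite_atMost finite_imageI order_trans)
  moreover have "degree_in (clique_path_graph a n) {..<n} i \<le> card (A \<union> {Suc i, i - 1})"
    unfolding degree_in_def by (intro card_mono) (auto simp: A_def clique_path_graph_def)
  moreover have "card (A \<union> {Suc i, i - 1}) \<le> card A + card {Suc i, i - 1}"
    by (rule card_Un_le)
  moreover have "card {Suc i, i - 1} \<le> 2" by (simp add: card_insert_le_m1)
  moreover have "card {..n div a} = n div a + 1" by simp
  ultimately show ?thesis by linarith
qed

section \<open>Asymptotics of the minimal spectral radius\<close>

lemma lambda_min_near_order_div:
  assumes "a \<ge> 1" and "2 * a \<le> n"
  shows "\<bar>lambda_min n a - real n / real a\<bar> \<le> 3"
proof -
  define X where "X = {spectral_radius_graph n E | E.
       simple_graph n E \<and> graph_connected n E \<and> independence_number n E = a}"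
  let ?G = "clique_path_graph a n"
  have n: "n \<ge> 1" using assms by simp
  have lower: "real n / real a - 1 \<le> x" if "x \<in> X" for x
    using that spectral_radius_graph_ge[OF _ n _ assms(1)] unfolding X_def by blast
  have G: "spectral_radius_graph n ?G \<in> X"
    unfolding X_def using simple_graph_clique_path_graph graph_connected_clique_path_graph[OF assms(1) n]
      independence_number_clique_path_graph[OF assms] by blast
  have "real (degree_in ?G {..<n} i) \<le> real n / real a + 3" for i
  proof -
    have "real (degree_in ?G {..<n} i) \<le> real (n div a + 3)"
      using degree_clique_path_graph_le by (simp only: of_nat_le_iff)
    then show ?thesis using of_nat_div_le_of_nat[of n a, where 'a = real] by simp
  qed
  then have "spectral_radius_graph n ?G \<le> real n / real a + 3"
    by (intro adj_eigenvalue_le_max_degree[OF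
          adj_eigenvalue_spectral_radius_graph[OF simple_graph_clique_path_graph n]])
  moreover have "lambda_min n a \<le> spectral_radius_graph n ?G"
    unfolding lambda_min_def X_def[symmetric] using G lower by (intro cInf_lower bdd_belowI) auto
  moreover have "real n / real a - 1 \<le> lambda_min n a"
    unfolding lambda_min_def X_def[symmetric] using G lower by (intro cInf_greatest) auto
  ultimately show ?thesis by linarith
qed

lemma LIMSEQ_div_real_of_bounded_deviation:
  fixes f :: "nat \<Rightarrow> real"
  assumes "eventually (\<lambda>n. \<bar>f n - c * real n\<bar> \<le> C) sequentially"
  shows "(\<lambda>n. f n / real n) \<longlonglongrightarrow> c"
proof (rule LIM_zero_cancel, rule Lim_null_comparison)
  show "eventually (\<lambda>n. norm (f n / real n - c) \<le> C / real n) sequentially"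
    using eventually_conj[OF assms eventually_gt_at_top[of 0]]
  proof (rule eventually_mono)
    fix n :: nat assume n: "\<bar>f n - c * real n\<bar> \<le> C \<and> 0 < n"
    then have "f n / real n - c = (f n - c * real n) / real n" by (simp add: field_simps)
    then show "norm (f n / real n - c) \<le> C / real n"
      using n by (simp add: abs_divide divide_right_mono)
  qed
  show "(\<lambda>n. C / real n) \<longlonglongrightarrow> 0" by (rule lim_const_over_n)
qed

theorem theorem1p1:
  fixes \<alpha> :: nat
  assumes "\<alpha> \<ge> 1"
  shows "(\<lambda>n. lambda_min n \<alpha> / real n) \<longlonglongrightarrow> 1 / real \<alpha>"
proof (rule LIMSEQ_div_real_of_bounded_deviation)
  show "eventually (\<lambda>n. \<bar>lambda_min n \<alpha> - 1 / real \<alpha> * real n\<bar> \<le> 3) sequentially"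
    unfolding eventually_sequentially
    using lambda_min_near_order_div[OF assms] by auto
qed

end
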